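(* Let $2\le n<d$ with $n=2$ or $n$ odd, let $n'=\min\{2n-1,d\}$, let $t$ be as defined below, let $E\in\mathrm{SL}(d,q)$ and put $T:=t^E=E^{-1}tE$. Suppose $T$ is a weak doubling element. Then: (1) $\dim(V_n\cap \mathrm{Fix}(T))\ge 1$, and if $n'<d$ then $\dim(V_n\cap\mathrm{Fix}(T))=1$; (2) if $n'<d$, then $\dim(F_{d-n}\cap \mathrm{Fix}(T))=d-n'$.
   Context: Vectors are row vectors and matrices act from the right; $\mathrm{Fix}(g)=\{x\in\mathbb{F}_q^d: xg=x\}$. $e_1,\dots,e_d$ is the standard basis of $V=\mathbb{F}_q^d$, $V_n=\langle e_1,\dots,e_n\rangle$, $F_{d-n}=\langle e_{n+1},\dots,e_d\rangle$, and $n'=\min\{2n-1,d\}$. An element $c\in\mathrm{GL}(d,q)$ is a weak doubling element if (C1) $\dim(V_n+V_nc)=n'$ and (C2) if $n'<d$ then $\dim(F_{d-n}+\mathrm{Fix}(c))=d$. $E_{i,j}(\lambda)$ is the identity matrix with $(i,j)$ entry replaced by $\lambda$ ($i\ne j$). The element $t$ is: $E_{1,2}(1)$ if $n=2$; $\operatorname{diag}(z_1,I_{d-n})$ if $n>2$ and $p=2$; $\operatorname{diag}(z_2,I_{d-n})$ if $n>2$ and $p$ odd, where ($P_\sigma$ being the $n\times n$ matrix with $e_iP_\sigma=e_{\sigma(i)}$) $z_1=P_{(1,n,n-1,\dots,2)}$ with $(1,n)$ entry changed to $-1$ if $n$ is even, and $z_2=P_{(2,n,n-1,\dots,3)}$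 with $(2,n)$ entry changed to $-1$ if $n$ is odd. In particular $\dim\mathrm{Fix}(t)=d-n+1$. *)

theory Defs
  imports "Jordan_Normal_Form.VS_Connect" "Jordan_Normal_Form.Gauss_Jordan_Elimination"
begin

text \<open>Conventions: vectors of V = F_q^d are elements of carrier_vec d (type 'a vec),
  matrices are 'a mat; indices are 0-based, so the paper's basis vector e_i is
  unit_vec d (i - 1).  Vectors are row vectors and matrices act from the right:
  the row vector x times g is computed as transpose g times the column x.\<close>

definition vmul :: "'a::comm_semiring_0 vec \<Rightarrow> 'a mat \<Rightarrow> 'a vec" where
  "vmul x g = transpose_mat g *\<^sub>v x"

definition subdim :: "nat \<Rightarrow> 'a::field vec set \<Rightarrow> nat" where
  "subdim d W = vectorspace.dim class_ring ((module_vec TYPE('a) d)\<lparr>carrier := W\<rparr>)"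

definition fixsp :: "nat \<Rightarrow> 'a::field mat \<Rightarrow> 'a vec set" where
  "fixsp d g = {x \<in> carrier_vec d. vmul x g = x}"

definition Vsp :: "nat \<Rightarrow> nat \<Rightarrow> 'a::field vec set" where
  "Vsp d n = {x \<in> carrier_vec d. \<forall>i. n \<le> i \<and> i < d \<longrightarrow> x $ i = 0}"

definition Fsp :: "nat \<Rightarrow> nat \<Rightarrow> 'a::field vec set" where
  "Fsp d n = {x \<in> carrier_vec d. \<forall>i. i < n \<longrightarrow> x $ i = 0}"

definition setsum_vec :: "'a::field vec set \<Rightarrow> 'a vec set \<Rightarrow> 'a vec set" where
  "setsum_vec A B = {a + b | a b. a \<in> A \<and> b \<in> B}"

definition img :: "'a::field vec set \<Rightarrow> 'a mat \<Rightarrow> 'a vec set" where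
  "img A c = (\<lambda>x. vmul x c) ` A"

definition nprime :: "nat \<Rightarrow> nat \<Rightarrow> nat" where
  "nprime n d = min (2 * n - 1) d"

definition weak_doubling :: "nat \<Rightarrow> nat \<Rightarrow> 'a::field mat \<Rightarrow> bool" where
  "weak_doubling d n c \<longleftrightarrow>
     subdim d (setsum_vec (Vsp d n) (img (Vsp d n) c)) = nprime n d \<and>
     (nprime n d < d \<longrightarrow> subdim d (setsum_vec (Fsp d n) (fixsp d c)) = d)"

definition elem_mat :: "nat \<Rightarrow> nat \<Rightarrow> nat \<Rightarrow> 'a::field \<Rightarrow> 'a mat" where
  "elem_mat d i j l = mat d d (\<lambda>(a, b). if a = i \<and> b = j then l else if a = b then 1 else 0)"

text \<open>P_sigma with e_i P_sigma = e_(sigma i): row i has its 1 in column sigma i.\<close>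
definition perm_mat :: "nat \<Rightarrow> (nat \<Rightarrow> nat) \<Rightarrow> 'a::field mat" where
  "perm_mat n \<sigma> = mat n n (\<lambda>(i, j). if j = \<sigma> i then 1 else 0)"

text \<open>sigma1 = cycle (1,n,n-1,...,2), 0-based: 0 -> n-1, k -> k-1 (1 <= k <= n-1)\<close>
definition sigma1 :: "nat \<Rightarrow> nat \<Rightarrow> nat" where
  "sigma1 n k = (if k = 0 then n - 1 else k - 1)"

text \<open>sigma2 = cycle (2,n,n-1,...,3), 0-based: 0 -> 0, 1 -> n-1, k -> k-1 (2 <= k <= n-1)\<close>
definition sigma2 :: "nat \<Rightarrow> nat \<Rightarrow> nat" where
  "sigma2 n k = (if k = 0 then 0 else if k = 1 then n - 1 else k - 1)"

definition z1 :: "nat \<Rightarrow> 'a::field mat" where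
  "z1 n = (let P = perm_mat n (sigma1 n) in
           if even n then mat n n (\<lambda>(i, j). if i = 0 \<and> j = n - 1 then -1 else P $$ (i, j)) else P)"

definition z2 :: "nat \<Rightarrow> 'a::field mat" where
  "z2 n = (let P = perm_mat n (sigma2 n) in
           if odd n then mat n n (\<lambda>(i, j). if i = 1 \<and> j = n - 1 then -1 else P $$ (i, j)) else P)"

definition diag_block :: "nat \<Rightarrow> 'a::field mat \<Rightarrow> 'a mat" where
  "diag_block d z = four_block_mat z (0\<^sub>m (dim_row z) (d - dim_row z)) (0\<^sub>m (d - dim_row z) (dim_row z)) (1\<^sub>m (d - dim_row z))"

definition tmat :: "nat \<Rightarrow> nat \<Rightarrow> 'a::{field,finite} mat" where
  "tmat d n = (if n = 2 then elem_mat d 0 1 1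
               else if CHAR('a) = 2 then diag_block d (z1 n)
               else diag_block d (z2 n))"

end

theory Submission
  imports Defs "HOL-Library.Cardinality"
begin

text \<open>Over a field with \<open>q\<close> elements a subspace \<open>W\<close> has \<open>q ^ dim W\<close> elements, and counting the
  fibres of \<open>(a, b) \<mapsto> a + b\<close> gives \<open>|A + B| \<cdot> |A \<inter> B| = |A| \<cdot> |B|\<close>; hence
  \<open>dim (A + B) + dim (A \<inter> B) = dim A + dim B\<close>.  Conjugation preserves the dimension of the fixed
  space, and a direct computation gives \<open>dim Fix(t) = d - n + 1\<close>.  With \<open>X = Fix(T)\<close>:
  \<open>dim (V\<^sub>n \<inter> X) \<ge> n + (d - n + 1) - d = 1\<close>; if \<open>n' = 2n - 1 < d\<close> then
  \<open>V\<^sub>n \<inter> X \<subseteq> V\<^sub>n \<inter> V\<^sub>nT\<close>, whose dimension is \<open>n + dim (V\<^sub>nT) - n' \<le> 1\<close> by (C1); and by (C2)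
  \<open>dim (F\<^sub>d\<^sub>-\<^sub>n \<inter> X) = (d - n) + (d - n + 1) - d = d - n'\<close>.\<close>

section \<open>Subspaces of a finite vector space\<close>

lemma (in vectorspace) card_carrier_eq_card_pow_dim:
  assumes "finite (carrier V)" and "finite (carrier K)"
  shows "card (carrier V) = card (carrier K) ^ dim"
proof -
  have "fin_dim"
    unfolding fin_dim_def using assms(1) span_closed span_mem by blast
  then obtain \<beta> where fin: "finite \<beta>" and basis: "basis \<beta>"
    using finite_basis_exists by blast
  then have \<beta>: "\<beta> \<subseteq> carrier V"
    unfolding basis_def by blast
  have unique: "\<exists>!a. a \<in> \<beta> \<rightarrow>\<^sub>E carrier K \<and> lincomb a \<beta> = v" if "v \<in> carrier V" for v
    using basis_criterion[OF fin \<beta>] basis that by blast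
  have "bij_betw (\<lambda>a. lincomb a \<beta>) (\<beta> \<rightarrow>\<^sub>E carrier K) (carrier V)"
  proof (rule bij_betw_imageI)
    have closed: "lincomb a \<beta> \<in> carrier V" if "a \<in> \<beta> \<rightarrow>\<^sub>E carrier K" for a
      using lincomb_closed[OF \<beta>] that by (simp add: PiE_iff)
    show "inj_on (\<lambda>a. lincomb a \<beta>) (\<beta> \<rightarrow>\<^sub>E carrier K)"
    proof (rule inj_onI)
      fix a b
      assume "a \<in> \<beta> \<rightarrow>\<^sub>E carrier K" "b \<in> \<beta> \<rightarrow>\<^sub>E carrier K" "lincomb a \<beta> = lincomb b \<beta>"
      then show "a = b"
        using unique[OF closed] by blast
    qed
    show "(\<lambda>a. lincomb a \<beta>) ` (\<beta> \<rightarrow>\<^sub>E carrier K) = carrier V"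
      using closed unique by blast
  qed
  then have "card (carrier V) = card (\<beta> \<rightarrow>\<^sub>E carrier K)"
    by (simp add: bij_betw_same_card)
  then show ?thesis
    using dim_basis[OF fin basis] by (simp add: card_PiE fin)
qed

lemma finite_carrier_vec [simp]: "finite (carrier_vec d :: 'a::finite vec set)"
proof (rule finite_subset)
  show "carrier_vec d \<subseteq> vec_of_list ` {xs :: 'a list. set xs \<subseteq> UNIV \<and> length xs = d}"
  proof
    fix x :: "'a vec"
    assume "x \<in> carrier_vec d"
    then show "x \<in> vec_of_list ` {xs. set xs \<subseteq> UNIV \<and> length xs = d}"
      by (intro image_eqI[where x = "list_of_vec x"]) (auto simp: vec_list)
  qed
  show "finite (vec_of_list ` {xs :: 'a list. set xs \<subseteq> UNIV \<and> length xs = d})"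
    by (intro finite_imageI finite_lists_length_eq) simp
qed

definition vec_subspace :: "nat \<Rightarrow> 'a::field vec set \<Rightarrow> bool" where
  "vec_subspace d W \<longleftrightarrow> W \<subseteq> carrier_vec d \<and> 0\<^sub>v d \<in> W \<and>
     (\<forall>x\<in>W. \<forall>y\<in>W. x + y \<in> W) \<and> (\<forall>c. \<forall>x\<in>W. c \<cdot>\<^sub>v x \<in> W)"

lemma vec_subspace_diff:
  assumes "vec_subspace d W" and "x \<in> W" and "y \<in> W"
  shows "x - y \<in> W"
proof -
  have "x + (-1) \<cdot>\<^sub>v y \<in> W"
    using assms unfolding vec_subspace_def by blast
  moreover have "x + (-1) \<cdot>\<^sub>v y = x - y"
    using assms unfolding vec_subspace_def by (auto simp: vec_eq_iff)
  ultimately show ?thesis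
    by simp
qed

lemma vec_subspace_Int:
  "vec_subspace d A \<Longrightarrow> vec_subspace d B \<Longrightarrow> vec_subspace d (A \<inter> B)"
  unfolding vec_subspace_def by blast

lemma vec_subspace_setsum_vec:
  assumes A: "vec_subspace d A" and B: "vec_subspace d B"
  shows "vec_subspace d (setsum_vec A B)"
  unfolding vec_subspace_def setsum_vec_def
proof (intro conjI ballI allI subsetI)
  have carrier: "A \<subseteq> carrier_vec d" "B \<subseteq> carrier_vec d"
    using A B unfolding vec_subspace_def by auto
  show "x \<in> carrier_vec d" if "x \<in> {a + b |a b. a \<in> A \<and> b \<in> B}" for x
    using that carrier by (auto intro!: add_carrier_vec)
  have "0\<^sub>v d = 0\<^sub>v d + (0\<^sub>v d :: 'a vec)" "0\<^sub>v d \<in> A" "0\<^sub>v d \<in> B"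
    using A B unfolding vec_subspace_def by auto
  then show "0\<^sub>v d \<in> {a + b |a b. a \<in> A \<and> b \<in> B}"
    by blast
  show "x + y \<in> {a + b |a b. a \<in> A \<and> b \<in> B}"
    if xy: "x \<in> {a + b |a b. a \<in> A \<and> b \<in> B}" "y \<in> {a + b |a b. a \<in> A \<and> b \<in> B}" for x y
  proof -
    obtain a b a' b' where ab: "a \<in> A" "b \<in> B" "a' \<in> A" "b' \<in> B" and "x = a + b" "y = a' + b'"
      using xy by blast
    moreover have "(a + b) + (a' + b') = (a + a') + (b + b')"
    proof -
      have "dim_vec a = d" "dim_vec b = d" "dim_vec a' = d" "dim_vec b' = d"
        using ab carrier by auto
      then show ?thesis
        by (intro eq_vecI) (simp_all add: ac_simps)
    qed
    moreover have "a + a' \<in> A" "b + b' \<in> B"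
      using ab A B unfolding vec_subspace_def by blast+
    ultimately show ?thesis
      by blast
  qed
  show "c \<cdot>\<^sub>v x \<in> {a + b |a b. a \<in> A \<and> b \<in> B}" if x: "x \<in> {a + b |a b. a \<in> A \<and> b \<in> B}" for c x
  proof -
    obtain a b where ab: "a \<in> A" "b \<in> B" and "x = a + b"
      using x by blast
    moreover have "c \<cdot>\<^sub>v (a + b) = c \<cdot>\<^sub>v a + c \<cdot>\<^sub>v b"
      using ab carrier by (intro smult_add_distrib_vec) auto
    moreover have "c \<cdot>\<^sub>v a \<in> A" "c \<cdot>\<^sub>v b \<in> B"
      using ab A B unfolding vec_subspace_def by blast+
    ultimately show ?thesis
      by blast
  qed
qed

lemma card_vec_subspace:
  fixes W :: "'a::{field,finite} vec set"
  assumes "vec_subspace d W"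
  shows "card W = CARD('a) ^ subdim d W"
proof -
  interpret vec_space "TYPE('a)" d .
  have "submodule class_ring W V"
    by (rule submodule.intro) (use assms vec_module in \<open>auto simp: vec_subspace_def\<close>)
  then have "vectorspace class_ring (V\<lparr>carrier := W\<rparr>)"
    by (intro subspace_is_vs) (simp add: subspace_def vectorspace_axioms)
  moreover have "finite W"
    using assms unfolding vec_subspace_def by (auto intro: finite_subset)
  ultimately have "card (carrier (V\<lparr>carrier := W\<rparr>)) =
      card (carrier (class_ring :: 'a ring)) ^ vectorspace.dim class_ring (V\<lparr>carrier := W\<rparr>)"
    by (intro vectorspace.card_carrier_eq_card_pow_dim) (simp_all add: class_ring_simps)
  then show ?thesis
    unfolding subdim_def by (simp add: class_ring_simps)
qed

lemma one_less_CARD_field: "1 < CARD('a::{field,finite})"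
  using card_mono[OF Finite_Set.finite_UNIV, of "{0::'a, 1}"] by simp

lemma subdim_eqI:
  fixes W :: "'a::{field,finite} vec set"
  assumes "vec_subspace d W" and "card W = CARD('a) ^ k"
  shows "subdim d W = k"
proof -
  have "CARD('a) ^ subdim d W = CARD('a) ^ k"
    using assms by (simp only: card_vec_subspace)
  then show ?thesis
    using power_inject_exp[OF one_less_CARD_field] by blast
qed

lemma subdim_mono:
  fixes A B :: "'a::{field,finite} vec set"
  assumes "vec_subspace d A" and "vec_subspace d B" and "A \<subseteq> B"
  shows "subdim d A \<le> subdim d B"
proof -
  have "finite B"
    using assms(2) unfolding vec_subspace_def by (auto intro: finite_subset)
  then have "card A \<le> card B"
    using assms(3) by (rule card_mono)
  then have "CARD('a) ^ subdim d A \<le> CARD('a) ^ subdim d B"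
    by (simp only: card_vec_subspace[OF assms(1)] card_vec_subspace[OF assms(2)])
  then show ?thesis
    by (rule power_le_imp_le_exp[OF one_less_CARD_field])
qed

lemma card_setsum_vec_Int:
  fixes A B :: "'a::{field,finite} vec set"
  assumes A: "vec_subspace d A" and B: "vec_subspace d B"
  shows "card (setsum_vec A B) * card (A \<inter> B) = card A * card B"
proof -
  have carrier: "A \<subseteq> carrier_vec d" "B \<subseteq> carrier_vec d"
    using A B unfolding vec_subspace_def by auto
  then have finite: "finite A" "finite B"
    by (auto intro: finite_subset)
  have dim: "\<And>x. x \<in> A \<Longrightarrow> dim_vec x = d" "\<And>x. x \<in> B \<Longrightarrow> dim_vec x = d"
    using carrier by auto
  let ?fibre = "\<lambda>s. {(a, b) \<in> A \<times> B. a + b = s}"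
  \<comment> \<open>each fibre of addition is a translate of \<open>{(c, - c) | c. c \<in> A \<inter> B}\<close>\<close>
  have card_fibre: "card (?fibre s) = card (A \<inter> B)" if s_sum: "s \<in> setsum_vec A B" for s
  proof -
    obtain a0 b0 where a0: "a0 \<in> A" and b0: "b0 \<in> B" and s: "s = a0 + b0"
      using s_sum unfolding setsum_vec_def by blast
    have "bij_betw (\<lambda>c. (a0 + c, b0 - c)) (A \<inter> B) (?fibre s)"
    proof (rule bij_betw_byWitness[where f' = "\<lambda>p. fst p - a0"])
      show "\<forall>c\<in>A \<inter> B. fst (a0 + c, b0 - c) - a0 = c"
        using a0 dim by (auto simp: vec_eq_iff)
      have "a0 + (a - a0) = a \<and> b0 - (a - a0) = b \<and> a - a0 \<in> A \<inter> B"
        if "a \<in> A" "b \<in> B" "a + b = a0 + b0" for a b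
      proof (intro conjI IntI)
        have "a $ i + b $ i = a0 $ i + b0 $ i" if "i < d" for i
          using arg_cong[OF \<open>a + b = a0 + b0\<close>, of "\<lambda>v. v $ i"] that dim a0 b0 \<open>b \<in> B\<close> by simp
        then have "a0 + (a - a0) = a" "b0 - (a - a0) = b" "a - a0 = b0 - b"
          using that a0 b0 dim by (auto simp: vec_eq_iff algebra_simps)
        then show "a0 + (a - a0) = a" "b0 - (a - a0) = b"
          by simp_all
        note diff = \<open>a - a0 = b0 - b\<close>
        show "a - a0 \<in> A"
          by (rule vec_subspace_diff[OF A \<open>a \<in> A\<close> a0])
        show "a - a0 \<in> B"
          unfolding diff by (rule vec_subspace_diff[OF B b0 \<open>b \<in> B\<close>])
      qed
      then show "\<forall>p\<in>?fibre s. (a0 + (fst p - a0), b0 - (fst p - a0)) = p"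
        and "(\<lambda>p. fst p - a0) ` ?fibre s \<subseteq> A \<inter> B"
        unfolding s by auto
      have "a0 + c \<in> A \<and> b0 - c \<in> B \<and> (a0 + c) + (b0 - c) = a0 + b0" if "c \<in> A \<inter> B" for c
        using that a0 b0 dim A vec_subspace_diff[OF B b0] unfolding vec_subspace_def
        by (auto simp: vec_eq_iff)
      then show "(\<lambda>c. (a0 + c, b0 - c)) ` (A \<inter> B) \<subseteq> ?fibre s"
        unfolding s by auto
    qed
    then show ?thesis
      by (simp add: bij_betw_same_card)
  qed
  have union: "A \<times> B = (\<Union>s\<in>setsum_vec A B. ?fibre s)"
    unfolding setsum_vec_def by blast
  have "finite (setsum_vec A B)"
    using vec_subspace_setsum_vec[OF A B] unfolding vec_subspace_def by (auto intro: finite_subset)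
  then have "card (\<Union>s\<in>setsum_vec A B. ?fibre s) = (\<Sum>s\<in>setsum_vec A B. card (?fibre s))"
    using finite by (intro card_UN_disjoint) (auto intro: finite_subset[of _ "A \<times> B"])
  then have "card A * card B = (\<Sum>s\<in>setsum_vec A B. card (?fibre s))"
    unfolding union[symmetric] by (simp add: card_cartesian_product)
  also have "\<dots> = card (setsum_vec A B) * card (A \<inter> B)"
    using card_fibre by simp
  finally show ?thesis ..
qed

lemma subdim_setsum_vec_Int:
  fixes A B :: "'a::{field,finite} vec set"
  assumes A: "vec_subspace d A" and B: "vec_subspace d B"
  shows "subdim d (setsum_vec A B) + subdim d (A \<inter> B) = subdim d A + subdim d B"
proof -
  have "CARD('a) ^ (subdim d (setsum_vec A B) + subdim d (A \<inter> B)) =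
      CARD('a) ^ (subdim d A + subdim d B)"
    using card_setsum_vec_Int[OF A B]
    unfolding power_add card_vec_subspace[OF A] card_vec_subspace[OF B]
      card_vec_subspace[OF vec_subspace_setsum_vec[OF A B]] card_vec_subspace[OF vec_subspace_Int[OF A B]] .
  then show ?thesis
    using power_inject_exp[OF one_less_CARD_field] by blast
qed

section \<open>Coordinate subspaces\<close>

lemma card_vecs_determined_on:
  fixes h :: "'a::finite vec \<Rightarrow> nat \<Rightarrow> 'a"
  assumes S: "S \<subseteq> {..<d}"
    and h: "\<And>x y. (\<forall>j\<in>{..<d} - S. x $ j = y $ j) \<Longrightarrow> h x = h y"
  shows "card {x \<in> carrier_vec d. \<forall>i\<in>S. x $ i = h x i} = CARD('a) ^ (d - card S)"
proof -
  let ?R = "{..<d} - S"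
  let ?f = "\<lambda>x. restrict (($) x) ?R"
  let ?g = "\<lambda>u. vec d (\<lambda>i. if i \<in> S then h (vec d u) i else u i)"
  have "bij_betw ?f {x \<in> carrier_vec d. \<forall>i\<in>S. x $ i = h x i} (?R \<rightarrow>\<^sub>E UNIV)"
  proof (rule bij_betw_byWitness[where f' = ?g])
    show "\<forall>x\<in>{x \<in> carrier_vec d. \<forall>i\<in>S. x $ i = h x i}. ?g (?f x) = x"
    proof (intro ballI eq_vecI)
      fix x i
      assume x: "x \<in> {x \<in> carrier_vec d. \<forall>i\<in>S. x $ i = h x i}" and i: "i < dim_vec x"
      have "h (vec d (?f x)) = h x"
        by (rule h) simp
      then show "?g (?f x) $ i = x $ i"
        using x i by (cases "i \<in> S") auto
    qed auto
    show "\<forall>u\<in>?R \<rightarrow>\<^sub>E UNIV. ?f (?g u) = u"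
    proof (intro ballI ext)
      fix u :: "nat \<Rightarrow> 'a" and j :: nat
      assume "u \<in> ?R \<rightarrow>\<^sub>E UNIV"
      then show "?f (?g u) j = u j"
        by (cases "j \<in> ?R") (auto simp: PiE_iff extensional_def)
    qed
    show "?g ` (?R \<rightarrow>\<^sub>E UNIV) \<subseteq> {x \<in> carrier_vec d. \<forall>i\<in>S. x $ i = h x i}"
    proof (intro image_subsetI CollectI conjI ballI)
      fix u i
      assume "i \<in> S"
      moreover have "h (?g u) = h (vec d u)"
        by (rule h) simp
      ultimately show "?g u $ i = h (?g u) i"
        using S by auto
    qed simp
  qed (intro image_subsetI restrict_PiE, simp)
  then have "card {x \<in> carrier_vec d. \<forall>i\<in>S. x $ i = h x i} = card (?R \<rightarrow>\<^sub>E (UNIV :: 'a set))"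
    by (rule bij_betw_same_card)
  also have "\<dots> = CARD('a) ^ (d - card S)"
    using S by (simp add: card_PiE card_Diff_subset finite_subset)
  finally show ?thesis .
qed

lemma vec_subspace_Vsp: "vec_subspace d (Vsp d n)"
  unfolding vec_subspace_def Vsp_def by auto

lemma vec_subspace_Fsp: "n \<le> d \<Longrightarrow> vec_subspace d (Fsp d n)"
  unfolding vec_subspace_def Fsp_def by auto

lemma subdim_Vsp:
  assumes "n \<le> d"
  shows "subdim d (Vsp d n :: 'a::{field,finite} vec set) = n"
proof (rule subdim_eqI[OF vec_subspace_Vsp])
  have "(Vsp d n :: 'a vec set) = {x \<in> carrier_vec d. \<forall>i\<in>{n..<d}. x $ i = 0}"
    unfolding Vsp_def by auto
  then show "card (Vsp d n :: 'a vec set) = CARD('a) ^ n"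
    using assms card_vecs_determined_on[where S = "{n..<d}" and d = d and h = "\<lambda>_ _. 0"]
    by (simp add: subset_iff)
qed

lemma subdim_Fsp:
  assumes "n \<le> d"
  shows "subdim d (Fsp d n :: 'a::{field,finite} vec set) = d - n"
proof (rule subdim_eqI[OF vec_subspace_Fsp[OF assms]])
  have "(Fsp d n :: 'a vec set) = {x \<in> carrier_vec d. \<forall>i\<in>{..<n}. x $ i = 0}"
    unfolding Fsp_def by auto
  then show "card (Fsp d n :: 'a vec set) = CARD('a) ^ (d - n)"
    using assms card_vecs_determined_on[where S = "{..<n}" and d = d and h = "\<lambda>_ _. 0"] by simp
qed

lemma subdim_le_dim:
  fixes W :: "'a::{field,finite} vec set"
  assumes "vec_subspace d W"
  shows "subdim d W \<le> d"
proof -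
  have "W \<subseteq> Vsp d d"
    using assms unfolding vec_subspace_def Vsp_def by auto
  then have "subdim d W \<le> subdim d (Vsp d d :: 'a vec set)"
    by (rule subdim_mono[OF assms vec_subspace_Vsp])
  also have "\<dots> = d"
    by (rule subdim_Vsp) (rule order_refl)
  finally show ?thesis .
qed

lemma subdim_Int_ge:
  fixes A B :: "'a::{field,finite} vec set"
  assumes "vec_subspace d A" and "vec_subspace d B"
  shows "subdim d A + subdim d B \<le> d + subdim d (A \<inter> B)"
  using subdim_setsum_vec_Int[OF assms] subdim_le_dim[OF vec_subspace_setsum_vec[OF assms]] by linarith

section \<open>Matrices acting on row vectors\<close>

lemma vmul_carrier [simp]: "T \<in> carrier_mat d d \<Longrightarrow> vmul x T \<in> carrier_vec d"
  unfolding vmul_def carrier_vec_def by simp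

lemma vmul_mult:
  "A \<in> carrier_mat d d \<Longrightarrow> B \<in> carrier_mat d d \<Longrightarrow> x \<in> carrier_vec d \<Longrightarrow>
    vmul x (A * B) = vmul (vmul x A) B"
  unfolding vmul_def by (simp add: transpose_mult[of A d d B d])

lemma vmul_one [simp]: "x \<in> carrier_vec d \<Longrightarrow> vmul x (1\<^sub>m d) = (x :: 'a::field vec)"
  unfolding vmul_def by simp

lemma vmul_index:
  assumes "T \<in> carrier_mat d d" and "x \<in> carrier_vec d" and "j < d"
  shows "vmul x T $ j = (\<Sum>i<d. T $$ (i, j) * x $ i)"
proof -
  have "vmul x T $ j = col T j \<bullet> x"
    using assms unfolding vmul_def by simp
  also have "\<dots> = (\<Sum>i<d. T $$ (i, j) * x $ i)"
    using assms unfolding scalar_prod_def by (intro sum.cong) auto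
  finally show ?thesis .
qed

lemma vmul_index_monomial_col:
  assumes T: "T \<in> carrier_mat d d" and x: "x \<in> carrier_vec d" and j: "j < d" and p: "p < d"
    and col: "\<And>i. i < d \<Longrightarrow> T $$ (i, j) = (if i = p then c else 0)"
  shows "vmul x T $ j = c * x $ p"
proof -
  have "vmul x T $ j = (\<Sum>i<d. if i = p then c * x $ i else 0)"
    unfolding vmul_index[OF T x j] by (intro sum.cong) (auto simp: col)
  then show ?thesis
    using p by simp
qed

lemma mem_fixsp_iff:
  assumes "T \<in> carrier_mat d d"
  shows "x \<in> fixsp d T \<longleftrightarrow> x \<in> carrier_vec d \<and> (\<forall>j<d. vmul x T $ j = x $ j)"
  using assms unfolding fixsp_def by (auto simp: vec_eq_iff)

lemma vec_subspace_fixsp: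
  assumes "T \<in> carrier_mat d d"
  shows "vec_subspace d (fixsp d T)"
  using assms unfolding vec_subspace_def fixsp_def vmul_def
  by (auto simp: mult_add_distrib_mat_vec mult_mat_vec)

lemma vec_subspace_img:
  assumes W: "vec_subspace d W" and T: "T \<in> carrier_mat d d"
  shows "vec_subspace d (img W T)"
proof -
  have "vmul (x + y) T = vmul x T + vmul y T" "vmul (c \<cdot>\<^sub>v x) T = c \<cdot>\<^sub>v vmul x T"
    if "x \<in> carrier_vec d" "y \<in> carrier_vec d" for x y c
    using that T unfolding vmul_def by (auto simp: mult_add_distrib_mat_vec mult_mat_vec)
  moreover have "vmul (0\<^sub>v d) T = 0\<^sub>v d"
    using T unfolding vmul_def by auto
  ultimately show ?thesis
    using W T unfolding vec_subspace_def img_def by (auto simp: subset_iff) (metis image_eqI)+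
qed

lemma subdim_img_le:
  fixes W :: "'a::{field,finite} vec set"
  assumes W: "vec_subspace d W" and T: "T \<in> carrier_mat d d"
  shows "subdim d (img W T) \<le> subdim d W"
proof -
  have "finite W"
    using W unfolding vec_subspace_def by (auto intro: finite_subset)
  then have "card (img W T) \<le> card W"
    unfolding img_def by (rule card_image_le)
  then have "CARD('a) ^ subdim d (img W T) \<le> CARD('a) ^ subdim d W"
    by (simp only: card_vec_subspace[OF W] card_vec_subspace[OF vec_subspace_img[OF W T]])
  then show ?thesis
    by (rule power_le_imp_le_exp[OF one_less_CARD_field])
qed

lemma subdim_Int_fixsp_le:
  fixes W :: "'a::{field,finite} vec set"
  assumes W: "vec_subspace d W" and T: "T \<in> carrier_mat d d"
  shows "subdim d (setsum_vec W (img W T)) + subdim d (W \<inter> fixsp d T) \<le> 2 * subdim d W"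
proof -
  have "W \<inter> fixsp d T \<subseteq> W \<inter> img W T"
    unfolding fixsp_def img_def by auto (metis image_eqI)
  then have "subdim d (W \<inter> fixsp d T) \<le> subdim d (W \<inter> img W T)"
    by (intro subdim_mono vec_subspace_Int W vec_subspace_fixsp vec_subspace_img T)
  then show ?thesis
    using subdim_setsum_vec_Int[OF W vec_subspace_img[OF W T]] subdim_img_le[OF W T] by linarith
qed

lemma mat_inverse_det_neq_0:
  assumes "E \<in> carrier_mat d d" and "det E \<noteq> (0 :: 'a::field)"
  obtains B where "mat_inverse E = Some B" and "B \<in> carrier_mat d d"
    and "B * E = 1\<^sub>m d" and "E * B = 1\<^sub>m d"
proof -
  have "E \<in> Units (ring_mat TYPE('a) d ())"
    by (rule det_non_zero_imp_unit[OF assms])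
  then obtain B where "mat_inverse E = Some B"
    using mat_inverse(1)[OF assms(1)] by fastforce
  with mat_inverse(2)[OF assms(1) this] show ?thesis
    using that by blast
qed

lemma fixsp_conj_eq_img:
  assumes B: "B \<in> carrier_mat d d" and t: "t \<in> carrier_mat d d" and E: "E \<in> carrier_mat d d"
    and BE: "B * E = 1\<^sub>m d" and EB: "E * B = 1\<^sub>m d"
  shows "fixsp d (B * t * E) = img (fixsp d t) E"
proof -
  have BE_cancel: "vmul (vmul x B) E = x" and EB_cancel: "vmul (vmul x E) B = x"
    if "x \<in> carrier_vec d" for x :: "'a vec"
    using that vmul_mult[OF B E] vmul_mult[OF E B] BE EB by simp_all
  have conj: "vmul x (B * t * E) = vmul (vmul (vmul x B) t) E" if "x \<in> carrier_vec d" for x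
    using that vmul_mult[OF mult_carrier_mat[OF B t] E] vmul_mult[OF B t] by simp
  show ?thesis
  proof (intro Set.set_eqI iffI)
    fix x
    assume x: "x \<in> fixsp d (B * t * E)"
    then have "vmul (vmul x B) t = vmul x B"
      using conj EB_cancel[of "vmul (vmul x B) t"] t B unfolding fixsp_def by auto
    then show "x \<in> img (fixsp d t) E"
      using x BE_cancel B unfolding fixsp_def img_def by (auto intro!: image_eqI[of _ _ "vmul x B"])
  next
    fix x
    assume "x \<in> img (fixsp d t) E"
    then obtain y where y: "y \<in> carrier_vec d" "vmul y t = y" and x: "x = vmul y E"
      unfolding fixsp_def img_def by auto
    then show "x \<in> fixsp d (B * t * E)"
      using conj EB_cancel E unfolding fixsp_def by simp
  qed
qed

lemma subdim_fixsp_conj: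
  fixes t :: "'a::{field,finite} mat"
  assumes B: "B \<in> carrier_mat d d" and t: "t \<in> carrier_mat d d" and E: "E \<in> carrier_mat d d"
    and BE: "B * E = 1\<^sub>m d" and EB: "E * B = 1\<^sub>m d"
  shows "subdim d (fixsp d (B * t * E)) = subdim d (fixsp d t)"
proof (rule subdim_eqI)
  show "vec_subspace d (fixsp d (B * t * E))"
    using B t E by (intro vec_subspace_fixsp) simp
  have "inj_on (\<lambda>x. vmul x E) (fixsp d t)"
    using vmul_mult[OF E B] EB unfolding fixsp_def by (intro inj_on_inverseI[of _ "\<lambda>x. vmul x B"]) auto
  then show "card (fixsp d (B * t * E)) = CARD('a) ^ subdim d (fixsp d t)"
    unfolding fixsp_conj_eq_img[OF assms] img_def
    by (simp add: card_image card_vec_subspace vec_subspace_fixsp t)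
qed

section \<open>The fixed space of t\<close>

lemma elem_mat_carrier: "elem_mat d i j l \<in> carrier_mat d d"
  unfolding elem_mat_def by simp

lemma vmul_elem_mat_0_1_index:
  assumes "2 \<le> d" and x: "x \<in> carrier_vec d" and j: "j < d"
  shows "vmul x (elem_mat d 0 1 1) $ j = x $ j + (if j = 1 then x $ 0 else 0)"
proof -
  have "vmul x (elem_mat d 0 1 1) $ j =
      (\<Sum>i<d. (if i = j then x $ i else 0) + (if i = 0 \<and> j = 1 then x $ i else 0))"
    unfolding vmul_index[OF elem_mat_carrier x j]
    by (intro sum.cong) (use j in \<open>auto simp: elem_mat_def\<close>)
  also have "\<dots> = x $ j + (if j = 1 then x $ 0 else 0)"
    using assms by (simp add: sum.distrib)
  finally show ?thesis .
qed

lemma fixsp_elem_mat_0_1: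
  assumes "2 \<le> d"
  shows "fixsp d (elem_mat d 0 1 1 :: 'a::field mat) = {x \<in> carrier_vec d. \<forall>i\<in>{0}. x $ i = 0}"
proof (intro Set.set_eqI iffI)
  fix x :: "'a vec"
  assume "x \<in> fixsp d (elem_mat d 0 1 1)"
  then have x: "x \<in> carrier_vec d" and "vmul x (elem_mat d 0 1 1) $ 1 = x $ 1"
    using assms unfolding mem_fixsp_iff[OF elem_mat_carrier] by auto
  then show "x \<in> {x \<in> carrier_vec d. \<forall>i\<in>{0}. x $ i = 0}"
    using vmul_elem_mat_0_1_index[OF assms x, of 1] assms by simp
next
  fix x :: "'a vec"
  assume "x \<in> {x \<in> carrier_vec d. \<forall>i\<in>{0}. x $ i = 0}"
  then have x: "x \<in> carrier_vec d" and "x $ 0 = 0"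
    by auto
  then have "vmul x (elem_mat d 0 1 1) $ j = x $ j" if "j < d" for j
    using vmul_elem_mat_0_1_index[OF assms x that] by simp
  with x show "x \<in> fixsp d (elem_mat d 0 1 1)"
    unfolding mem_fixsp_iff[OF elem_mat_carrier] by simp
qed

lemma diag_block_carrier:
  "z \<in> carrier_mat n n \<Longrightarrow> n \<le> d \<Longrightarrow> diag_block d z \<in> carrier_mat d d"
  unfolding diag_block_def carrier_mat_def by auto

lemma diag_block_index:
  assumes "z \<in> carrier_mat n n" and "n \<le> d" and "i < d" and "j < d"
  shows "diag_block d z $$ (i, j) = (if i < n \<and> j < n then z $$ (i, j) else if i = j then 1 else 0)"
  using assms unfolding diag_block_def by auto

lemma vmul_diag_block_index:
  assumes z: "z \<in> carrier_mat n n" and n: "n \<le> d" and x: "x \<in> carrier_vec d" and j: "j < d"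
    and col: "j < n \<Longrightarrow> p < n \<and> (\<forall>i<n. z $$ (i, j) = (if i = p then c else 0))"
  shows "vmul x (diag_block d z) $ j = (if j < n then c * x $ p else x $ j)"
proof (cases "j < n")
  case True
  have "vmul x (diag_block d z) $ j = c * x $ p"
  proof (rule vmul_index_monomial_col[OF diag_block_carrier[OF z n] x j])
    show "p < d"
      using col True n by simp
    show "diag_block d z $$ (i, j) = (if i = p then c else 0)" if "i < d" for i
      using col True unfolding diag_block_index[OF z n that j] by auto
  qed
  then show ?thesis
    using True by simp
next
  case False
  have "vmul x (diag_block d z) $ j = 1 * x $ j"
  proof (rule vmul_index_monomial_col[OF diag_block_carrier[OF z n] x j j])
    show "diag_block d z $$ (i, j) = (if i = j then 1 else 0)" if "i < d" for i
      using False unfolding diag_block_index[OF z n that j] by auto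
  qed
  then show ?thesis
    using False by simp
qed

lemma z1_carrier: "z1 n \<in> carrier_mat n n"
  unfolding z1_def perm_mat_def Let_def by auto

lemma z2_carrier: "z2 n \<in> carrier_mat n n"
  unfolding z2_def perm_mat_def Let_def by auto

text \<open>Column \<open>j < n\<close> of \<open>z1 n\<close> (resp. \<open>z2 n\<close>) has its only nonzero entry in row
  \<open>sigma1_inv n j\<close> (resp. \<open>sigma2_inv n j\<close>); beyond \<open>n\<close> both are the identity, as is
  \<open>diag_block d\<close> there.\<close>

definition sigma1_inv :: "nat \<Rightarrow> nat \<Rightarrow> nat" where
  "sigma1_inv n j = (if Suc j = n then 0 else if j < n then Suc j else j)"

definition sigma2_inv :: "nat \<Rightarrow> nat \<Rightarrow> nat" where
  "sigma2_inv n j = (if j = 0 then 0 else if Suc j = n then 1 else if j < n then Suc j else j)"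

lemma sigma1_inv_iff:
  "i < n \<Longrightarrow> j < n \<Longrightarrow> j = sigma1 n i \<longleftrightarrow> i = sigma1_inv n j"
  unfolding sigma1_def sigma1_inv_def by auto

lemma sigma2_inv_iff:
  "i < n \<Longrightarrow> j < n \<Longrightarrow> j = sigma2 n i \<longleftrightarrow> i = sigma2_inv n j"
  unfolding sigma2_def sigma2_inv_def by auto

lemma sigma1_inv_less: "j < n \<Longrightarrow> sigma1_inv n j < n"
  unfolding sigma1_inv_def by simp

lemma sigma2_inv_less: "j < n \<Longrightarrow> sigma2_inv n j < n"
  unfolding sigma2_inv_def by simp

lemma z1_index:
  assumes "odd n" and "i < n" and "j < n"
  shows "(z1 n :: 'a::field mat) $$ (i, j) = (if i = sigma1_inv n j then 1 else 0)"
proof -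
  have "(z1 n :: 'a mat) = perm_mat n (sigma1 n)"
    using assms(1) by (simp add: z1_def Let_def)
  then show ?thesis
    using assms(2,3) by (simp add: perm_mat_def sigma1_inv_iff)
qed

lemma z2_index:
  assumes "odd n" and "3 \<le> n" and "i < n" and "j < n"
  shows "(z2 n :: 'a::field mat) $$ (i, j) =
    (if i = sigma2_inv n j then if Suc j = n then -1 else 1 else 0)"
proof -
  have "(z2 n :: 'a mat) $$ (i, j) =
      (if i = 1 \<and> j = n - 1 then -1 else if j = sigma2 n i then 1 else 0)"
    using assms by (simp add: z2_def Let_def perm_mat_def sigma2_def)
  moreover have "i = 1 \<and> j = n - 1 \<longleftrightarrow> i = sigma2_inv n j \<and> Suc j = n"
    using assms(2,4) by (auto simp: sigma2_inv_def)
  ultimately show ?thesis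
    using sigma2_inv_iff[OF assms(3,4)] by auto
qed

lemma vmul_diag_block_z1_index:
  assumes "odd n" and n: "n \<le> d" and x: "x \<in> carrier_vec d" and j: "j < d"
  shows "vmul x (diag_block d (z1 n)) $ j = x $ sigma1_inv n j"
proof -
  have "vmul x (diag_block d (z1 n)) $ j = (if j < n then 1 * x $ sigma1_inv n j else x $ j)"
    by (intro vmul_diag_block_index[OF z1_carrier n x j])
      (simp add: z1_index[OF \<open>odd n\<close>] sigma1_inv_less)
  then show ?thesis
    by (cases "j < n") (simp_all add: sigma1_inv_def)
qed

lemma vmul_diag_block_z2_index:
  assumes "odd n" and "3 \<le> n" and n: "n \<le> d" and x: "x \<in> carrier_vec d" and j: "j < d"
  shows "vmul x (diag_block d (z2 n)) $ j =
    (if Suc j = n then - x $ sigma2_inv n j else x $ sigma2_inv n j)"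
proof -
  have "vmul x (diag_block d (z2 n)) $ j =
      (if j < n then (if Suc j = n then -1 else 1) * x $ sigma2_inv n j else x $ j)"
    by (intro vmul_diag_block_index[OF z2_carrier n x j])
      (simp add: z2_index[OF \<open>odd n\<close> \<open>3 \<le> n\<close>] sigma2_inv_less)
  then show ?thesis
    by (cases "j < n") (simp_all add: sigma2_inv_def)
qed

lemma fixsp_diag_block_z1:
  assumes "odd n" and n: "n \<le> d"
  shows "fixsp d (diag_block d (z1 n)) = {x \<in> carrier_vec d. \<forall>i\<in>{1..<n}. x $ i = x $ 0}"
proof (intro Set.set_eqI iffI)
  fix x :: "'a vec"
  assume "x \<in> fixsp d (diag_block d (z1 n))"
  then have x: "x \<in> carrier_vec d" and fixed0: "\<And>j. j < d \<Longrightarrow> vmul x (diag_block d (z1 n)) $ j = x $ j"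
    unfolding mem_fixsp_iff[OF diag_block_carrier[OF z1_carrier n]] by auto
  have const: "x $ i = x $ 0" if "i < n" for i
    using that
  proof (induction i)
    case (Suc i)
    have "sigma1_inv n i = Suc i"
      using Suc.prems unfolding sigma1_inv_def by simp
    then have "x $ Suc i = x $ i"
      using fixed0[of i] vmul_diag_block_z1_index[OF assms x, of i] Suc.prems n by simp
    with Suc show ?case
      by simp
  qed simp
  show "x \<in> {x \<in> carrier_vec d. \<forall>i\<in>{1..<n}. x $ i = x $ 0}"
    using x by (auto intro: const)
next
  fix x :: "'a vec"
  assume "x \<in> {x \<in> carrier_vec d. \<forall>i\<in>{1..<n}. x $ i = x $ 0}"
  then have x: "x \<in> carrier_vec d" and const1: "\<forall>i\<in>{1..<n}. x $ i = x $ 0"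
    by auto
  have const: "x $ i = x $ 0" if "i < n" for i
    using const1 that by (cases "i = 0") auto
  have "x $ sigma1_inv n j = x $ j" for j
  proof (cases "j < n")
    case True
    then show ?thesis
      using const sigma1_inv_less by metis
  next
    case False
    then show ?thesis
      unfolding sigma1_inv_def by simp
  qed
  with x show "x \<in> fixsp d (diag_block d (z1 n))"
    unfolding mem_fixsp_iff[OF diag_block_carrier[OF z1_carrier n]]
    by (simp add: vmul_diag_block_z1_index[OF assms x])
qed

lemma two_neq_zero_if_CHAR_neq_2:
  assumes "CHAR('a::field) \<noteq> 2"
  shows "(2 :: 'a) \<noteq> 0"
proof
  assume "(2 :: 'a) = 0"
  then have "CHAR('a) dvd 2"
    using of_nat_eq_0_iff_char_dvd[of 2, where 'a = 'a] by simp
  then have "CHAR('a) \<le> 2"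
    by (rule dvd_imp_le) simp
  moreover have "CHAR('a) \<noteq> 0"
    using \<open>CHAR('a) dvd 2\<close> by (metis dvd_0_left_iff zero_neq_numeral)
  moreover have "CHAR('a) \<noteq> Suc 0"
    by simp
  ultimately show False
    using assms by linarith
qed

lemma neg_eq_self_imp_zero:
  assumes "CHAR('a::field) \<noteq> 2" and "- x = (x :: 'a)"
  shows "x = 0"
proof -
  have "2 * x = x + x"
    by (rule mult_2)
  also have "\<dots> = 0"
    using assms(2) by (metis neg_eq_iff_add_eq_0)
  finally show ?thesis
    using two_neq_zero_if_CHAR_neq_2[OF assms(1)] by simp
qed

lemma fixsp_diag_block_z2:
  assumes "odd n" and "3 \<le> n" and n: "n \<le> d" and char: "CHAR('a::field) \<noteq> 2"
  shows "fixsp d (diag_block d (z2 n) :: 'a mat) = {x \<in> carrier_vec d. \<forall>i\<in>{1..<n}. x $ i = 0}"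
proof (intro Set.set_eqI iffI)
  fix x :: "'a vec"
  assume "x \<in> fixsp d (diag_block d (z2 n))"
  then have x: "x \<in> carrier_vec d" and fixed: "\<And>j. j < d \<Longrightarrow> vmul x (diag_block d (z2 n)) $ j = x $ j"
    unfolding mem_fixsp_iff[OF diag_block_carrier[OF z2_carrier n]] by auto
  note vmul_z2 = vmul_diag_block_z2_index[OF assms(1-3) x]
  have const: "x $ i = x $ 1" if "1 \<le> i" and "i < n" for i
    using that
  proof (induction i)
    case (Suc i)
    show ?case
    proof (cases "i = 0")
      case False
      then have "sigma2_inv n i = Suc i" and "Suc i \<noteq> n"
        using Suc.prems unfolding sigma2_inv_def by auto
      then have "x $ Suc i = x $ i"
        using fixed[of i] vmul_z2[of i] Suc.prems n by simp
      with False Suc show ?thesis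
        by simp
    qed simp
  qed simp
  have "sigma2_inv n (n - 1) = 1"
    using \<open>3 \<le> n\<close> unfolding sigma2_inv_def by simp
  then have "- x $ 1 = x $ (n - 1)"
    using fixed[of "n - 1"] vmul_z2[of "n - 1"] \<open>3 \<le> n\<close> n by simp
  also have "\<dots> = x $ 1"
    using const[of "n - 1"] \<open>3 \<le> n\<close> by simp
  finally have "x $ 1 = 0"
    by (rule neg_eq_self_imp_zero[OF char])
  then have zero: "x $ i = 0" if "1 \<le> i" and "i < n" for i
    using const[OF that] by simp
  show "x \<in> {x \<in> carrier_vec d. \<forall>i\<in>{1..<n}. x $ i = 0}"
    using x by (auto intro: zero)
next
  fix x :: "'a vec"
  assume "x \<in> {x \<in> carrier_vec d. \<forall>i\<in>{1..<n}. x $ i = 0}"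
  then have x: "x \<in> carrier_vec d" and zero: "\<And>i. 1 \<le> i \<Longrightarrow> i < n \<Longrightarrow> x $ i = 0"
    by auto
  have "(if Suc j = n then - x $ sigma2_inv n j else x $ sigma2_inv n j) = x $ j" for j
  proof (cases "1 \<le> j \<and> j < n")
    case True
    then have "1 \<le> sigma2_inv n j" and "sigma2_inv n j < n"
      unfolding sigma2_inv_def by auto
    with True show ?thesis
      by (simp add: zero)
  next
    case False
    then have "sigma2_inv n j = j" and "Suc j \<noteq> n"
      using \<open>3 \<le> n\<close> unfolding sigma2_inv_def by auto
    then show ?thesis
      by simp
  qed
  with x show "x \<in> fixsp d (diag_block d (z2 n))"
    unfolding mem_fixsp_iff[OF diag_block_carrier[OF z2_carrier n]]
    by (simp add: vmul_diag_block_z2_index[OF assms(1-3) x])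
qed

lemma tmat_carrier: "n \<le> d \<Longrightarrow> tmat d n \<in> carrier_mat d d"
  unfolding tmat_def
  by (simp add: elem_mat_carrier diag_block_carrier[OF z1_carrier] diag_block_carrier[OF z2_carrier])

lemma subdim_fixsp_tmat:
  assumes "2 \<le> n" and n: "n \<le> d" and "n = 2 \<or> odd n"
  shows "subdim d (fixsp d (tmat d n :: 'a::{field,finite} mat)) = d - n + 1"
proof (rule subdim_eqI[OF vec_subspace_fixsp[OF tmat_carrier[OF n]]])
  consider (two) "n = 2" | (char2) "odd n" "3 \<le> n" "CHAR('a) = 2" | (odd) "odd n" "3 \<le> n" "CHAR('a) \<noteq> 2"
    using assms by fastforce
  then show "card (fixsp d (tmat d n :: 'a mat)) = CARD('a) ^ (d - n + 1)"
  proof cases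
    case two
    then have "fixsp d (tmat d n :: 'a mat) = {x \<in> carrier_vec d. \<forall>i\<in>{0}. x $ i = 0}"
      using n fixsp_elem_mat_0_1[where 'a = 'a] unfolding tmat_def by simp
    moreover have "d - n + 1 = d - card {0 :: nat}"
      using two n by simp
    ultimately show ?thesis
      using n two by (simp only:) (rule card_vecs_determined_on, auto)
  next
    case char2
    then have "fixsp d (tmat d n :: 'a mat) = {x \<in> carrier_vec d. \<forall>i\<in>{1..<n}. x $ i = x $ 0}"
      using n fixsp_diag_block_z1[where 'a = 'a] unfolding tmat_def by simp
    moreover have "d - n + 1 = d - card {1..<n}"
      using char2 n by simp
    ultimately show ?thesis
      using n char2 by (simp only:) (rule card_vecs_determined_on[where h = "\<lambda>x _. x $ 0"], auto)
  next
    case odd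
    then have "fixsp d (tmat d n :: 'a mat) = {x \<in> carrier_vec d. \<forall>i\<in>{1..<n}. x $ i = 0}"
      using n fixsp_diag_block_z2[where 'a = 'a] unfolding tmat_def by simp
    moreover have "d - n + 1 = d - card {1..<n}"
      using odd n by simp
    ultimately show ?thesis
      using n odd by (simp only:) (rule card_vecs_determined_on, auto)
  qed
qed

theorem lemma7p7:
  fixes n d :: nat and E T :: "'a::{field,finite} mat"
  assumes "2 \<le> n" and "n < d" and "n = 2 \<or> odd n"
    and "E \<in> carrier_mat d d" and "det E = 1"
    and "T = the (mat_inverse E) * tmat d n * E"
    and "weak_doubling d n T"
  shows "subdim d (Vsp d n \<inter> fixsp d T) \<ge> 1 \<and>
           (nprime n d < d \<longrightarrow> subdim d (Vsp d n \<inter> fixsp d T) = 1) \<and>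
         (nprime n d < d \<longrightarrow> subdim d (Fsp d n \<inter> fixsp d T) = d - nprime n d)"
proof -
  obtain B where "mat_inverse E = Some B" and B: "B \<in> carrier_mat d d" "B * E = 1\<^sub>m d" "E * B = 1\<^sub>m d"
    using mat_inverse_det_neq_0[OF assms(4)] assms(5) by auto
  then have T: "T = B * tmat d n * E"
    using assms(6) by simp
  have t: "tmat d n \<in> carrier_mat d d"
    using assms(2) by (simp add: tmat_carrier)
  then have Tc: "T \<in> carrier_mat d d"
    unfolding T using B(1) assms(4) by (intro mult_carrier_mat)
  then have X: "vec_subspace d (fixsp d T)"
    by (rule vec_subspace_fixsp)
  have dim_X: "subdim d (fixsp d T) = d - n + 1"
    unfolding T subdim_fixsp_conj[OF B(1) t assms(4) B(2,3)] using assms(1-3) by (simp add: subdim_fixsp_tmat)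
  have dim_V: "subdim d (Vsp d n :: 'a vec set) = n" and dim_F: "subdim d (Fsp d n :: 'a vec set) = d - n"
    using assms(2) by (simp_all add: subdim_Vsp subdim_Fsp)
  have "1 \<le> subdim d (Vsp d n \<inter> fixsp d T)"
    using subdim_Int_ge[OF vec_subspace_Vsp[of d n] X] dim_V dim_X assms(2) by linarith
  moreover have "subdim d (Vsp d n \<inter> fixsp d T) \<le> 1" if "nprime n d < d"
    using subdim_Int_fixsp_le[OF vec_subspace_Vsp[of d n] Tc] assms(7) that dim_V
    unfolding weak_doubling_def nprime_def by simp
  moreover have "subdim d (Fsp d n \<inter> fixsp d T) = d - nprime n d" if "nprime n d < d"
    using subdim_setsum_vec_Int[OF vec_subspace_Fsp[of n d] X] assms(1,2,7) that dim_F dim_X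
    unfolding weak_doubling_def nprime_def by simp
  ultimately show ?thesis
    by auto
qed

end
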